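(* Let $\mathcal{G}$ be an MVPP always-grabbing pawn game with pawns $[d]$, let $\langle v,P\rangle$ be a configuration, let $j\in[d]$ be the pawn with $v\in V_j$, and let $P'\subseteq P$. (1) If ($j\in P$ implies $j\in P'$) and Player 1 wins from $\langle v,P\rangle$, then Player 1 wins from $\langle v,P'\rangle$. (2) If ($j\notin P'$ implies $j\notin P$) and Player 2 wins from $\langle v,P'\rangle$, then Player 2 wins from $\langle v,P\rangle$.
   Context: A pawn game with $d$ pawns consists of a finite directed graph $(V,E)$, a target set $T\subseteq V$, and sets $V_1,\dots,V_d$ partitioning $V$ (MVPP), where Pawn $j$ owns the vertices in $V_j$. A configuration $\langle v,P\rangle$ gives the token position and the set $P\subseteq[d]$ of pawns controlled by Player 1 (Player 2 controls the rest). At $\langle v,P\rangle$, Player 1 moves the token along an edge iff he controls the pawn owning $v$; otherwise Player 2 moves. Under always grabbing, after every move of Player $i$, the other player must take exactly one pawn currently controlled by Player $i$. Player 1 wins a play iff it visits $T$, otherwise Player 2 wins; winning from a configuration means having a strategy that wins against all opponent strategies. *)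

theory Defs
  imports Main
begin

text \<open>A vertex v is owned by pawn own v (MVPP: each vertex is owned
by exactly one pawn, i.e. V_j = {v \<in> V. own v = j}).
A configuration is a pair (v, P): token position and the set of pawns controlled by Player 1.\<close>

type_synonym 'v config = "'v \<times> nat set"

definition pawn_game :: "'v set \<Rightarrow> ('v \<times> 'v) set \<Rightarrow> 'v set \<Rightarrow> nat \<Rightarrow> ('v \<Rightarrow> nat) \<Rightarrow> bool" where
  "pawn_game V E T d own \<longleftrightarrow>
     finite V \<and> E \<subseteq> V \<times> V \<and> T \<subseteq> V \<and>
     (\<forall>v\<in>V. own v \<in> {1..d}) \<and>
     (\<forall>v\<in>V. \<exists>u. (v, u) \<in> E)"

text \<open>A strategy of a player: a move function (history to successor vertex), used when the
player controls the pawn owning the current vertex, and a grab function (history and the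
opponent's chosen successor to a pawn), used after the opponent has moved.\<close>

type_synonym 'v strategy = "('v config list \<Rightarrow> 'v) \<times> ('v config list \<Rightarrow> 'v \<Rightarrow> nat)"

definition legal1 :: "'v set \<Rightarrow> ('v \<times> 'v) set \<Rightarrow> nat \<Rightarrow> ('v \<Rightarrow> nat) \<Rightarrow> 'v strategy \<Rightarrow> bool" where
  "legal1 V E d own \<sigma> \<longleftrightarrow>
     (\<forall>h v P. h \<noteq> [] \<longrightarrow> last h = (v, P) \<longrightarrow> v \<in> V \<longrightarrow> P \<subseteq> {1..d} \<longrightarrow>
        (own v \<in> P \<longrightarrow> (v, fst \<sigma> h) \<in> E) \<and>
        (own v \<notin> P \<longrightarrow> (\<forall>u. (v, u) \<in> E \<longrightarrow> snd \<sigma> h u \<in> {1..d} - P)))"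

definition legal2 :: "'v set \<Rightarrow> ('v \<times> 'v) set \<Rightarrow> nat \<Rightarrow> ('v \<Rightarrow> nat) \<Rightarrow> 'v strategy \<Rightarrow> bool" where
  "legal2 V E d own \<tau> \<longleftrightarrow>
     (\<forall>h v P. h \<noteq> [] \<longrightarrow> last h = (v, P) \<longrightarrow> v \<in> V \<longrightarrow> P \<subseteq> {1..d} \<longrightarrow>
        (own v \<notin> P \<longrightarrow> (v, fst \<tau> h) \<in> E) \<and>
        (own v \<in> P \<longrightarrow> (\<forall>u. (v, u) \<in> E \<longrightarrow> snd \<tau> h u \<in> P)))"

definition next_config :: "('v \<Rightarrow> nat) \<Rightarrow> 'v strategy \<Rightarrow> 'v strategy \<Rightarrow> 'v config list \<Rightarrow> 'v config" where
  "next_config own \<sigma> \<tau> h =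
     (let (v, P) = last h in
      if own v \<in> P
      then (let u = fst \<sigma> h in (u, P - {snd \<tau> h u}))
      else (let u = fst \<tau> h in (u, P \<union> {snd \<sigma> h u})))"

fun history :: "('v \<Rightarrow> nat) \<Rightarrow> 'v strategy \<Rightarrow> 'v strategy \<Rightarrow> 'v config \<Rightarrow> nat \<Rightarrow> 'v config list" where
  "history own \<sigma> \<tau> c 0 = [c]"
| "history own \<sigma> \<tau> c (Suc n) =
     history own \<sigma> \<tau> c n @ [next_config own \<sigma> \<tau> (history own \<sigma> \<tau> c n)]"

definition play :: "('v \<Rightarrow> nat) \<Rightarrow> 'v strategy \<Rightarrow> 'v strategy \<Rightarrow> 'v config \<Rightarrow> nat \<Rightarrow> 'v config" where
  "play own \<sigma> \<tau> c n = last (history own \<sigma> \<tau> c n)"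

definition wins1 :: "'v set \<Rightarrow> ('v \<times> 'v) set \<Rightarrow> 'v set \<Rightarrow> nat \<Rightarrow> ('v \<Rightarrow> nat) \<Rightarrow> 'v config \<Rightarrow> bool" where
  "wins1 V E T d own c \<longleftrightarrow>
     (\<exists>\<sigma>. legal1 V E d own \<sigma> \<and>
        (\<forall>\<tau>. legal2 V E d own \<tau> \<longrightarrow> (\<exists>n. fst (play own \<sigma> \<tau> c n) \<in> T)))"

definition wins2 :: "'v set \<Rightarrow> ('v \<times> 'v) set \<Rightarrow> 'v set \<Rightarrow> nat \<Rightarrow> ('v \<Rightarrow> nat) \<Rightarrow> 'v config \<Rightarrow> bool" where
  "wins2 V E T d own c \<longleftrightarrow>
     (\<exists>\<tau>. legal2 V E d own \<tau> \<and>
        (\<forall>\<sigma>. legal1 V E d own \<sigma> \<longrightarrow> (\<forall>n. fst (play own \<sigma> \<tau> c n) \<notin> T)))"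

end

(* Player 1 plays from <v, P'> by running his winning strategy sigma from <v, P> on a shadow play
   that visits the same vertices. The invariant is that the real pawn set is contained in the shadow
   one and that both plays agree on who controls the token. When the opponent grabs a pawn k in the
   real play, the shadow opponent grabs k too, or the owner of the next vertex if that is needed to
   keep control aligned; when sigma grabs g in the shadow play, Player 1 grabs g in the real play,
   or again the owner of the next vertex. The shadow play is consistent with sigma, and every
   sigma-consistent run is a play of sigma against some legal opponent, so it reaches T.
   Part (2) is part (1) for Player 2: complementing pawn sets within [d] exchanges the roles of the
   two players, and the simulation preserves the vertex sequence, whatever the objective. *)

theory Submission
  imports Defs
begin

(* Legality constrains a strategy also on histories that arise in no play; legalizing repairs it
   there and keeps every choice that is already legal. *)
definition legalize1 :: "('v \<times> 'v) set \<Rightarrow> nat \<Rightarrow> 'v strategy \<Rightarrow> 'v strategy" where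
  "legalize1 E d \<sigma> =
     (\<lambda>h. if (fst (last h), fst \<sigma> h) \<in> E then fst \<sigma> h else (SOME u. (fst (last h), u) \<in> E),
      \<lambda>h u. if snd \<sigma> h u \<in> {1..d} - snd (last h) then snd \<sigma> h u
            else (SOME k. k \<in> {1..d} - snd (last h)))"

definition legalize2 :: "('v \<times> 'v) set \<Rightarrow> 'v strategy \<Rightarrow> 'v strategy" where
  "legalize2 E \<tau> =
     (\<lambda>h. if (fst (last h), fst \<tau> h) \<in> E then fst \<tau> h else (SOME u. (fst (last h), u) \<in> E),
      \<lambda>h u. if snd \<tau> h u \<in> snd (last h) then snd \<tau> h u else (SOME k. k \<in> snd (last h)))"

lemma legal1_legalize1:
  assumes "pawn_game V E T d own"
  shows "legal1 V E d own (legalize1 E d \<sigma>)"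
  unfolding legal1_def
proof (intro allI impI conjI)
  fix h v P assume h: "h \<noteq> []" "last h = (v, P)" "v \<in> V" "P \<subseteq> {1..d}"
  then obtain u where "(v, u) \<in> E"
    using assms unfolding pawn_game_def by blast
  then show "(v, fst (legalize1 E d \<sigma>) h) \<in> E"
    using h(2) unfolding legalize1_def by (auto intro: someI)
  assume "own v \<notin> P"
  then have "own v \<in> {1..d} - P"
    using assms h(3) unfolding pawn_game_def by auto
  then have "(SOME k. k \<in> {1..d} - P) \<in> {1..d} - P"
    by (rule someI)
  then show "snd (legalize1 E d \<sigma>) h u \<in> {1..d} - P" for u
    using h(2) unfolding legalize1_def by auto
qed

lemma legal2_legalize2:
  assumes "pawn_game V E T d own"
  shows "legal2 V E d own (legalize2 E \<tau>)"
  unfolding legal2_def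
proof (intro allI impI conjI)
  fix h v P assume h: "h \<noteq> []" "last h = (v, P)" "v \<in> V" "P \<subseteq> {1..d}"
  then obtain u where "(v, u) \<in> E"
    using assms unfolding pawn_game_def by blast
  then show "(v, fst (legalize2 E \<tau>) h) \<in> E"
    using h(2) unfolding legalize2_def by (auto intro: someI)
  assume "own v \<in> P"
  then have "(SOME k. k \<in> P) \<in> P"
    by (rule someI)
  then show "snd (legalize2 E \<tau>) h u \<in> P" for u
    using h(2) unfolding legalize2_def by auto
qed

lemma fst_legalize1: "(fst (last h), fst \<sigma> h) \<in> E \<Longrightarrow> fst (legalize1 E d \<sigma>) h = fst \<sigma> h"
  by (simp add: legalize1_def)

lemma snd_legalize1:
  "snd \<sigma> h u \<in> {1..d} - snd (last h) \<Longrightarrow> snd (legalize1 E d \<sigma>) h u = snd \<sigma> h u"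
  by (simp add: legalize1_def)

lemma history_not_Nil [simp]: "history own \<sigma> \<tau> c n \<noteq> []"
  by (cases n) auto

lemma next_config_eq:
  "last h = (v, P) \<Longrightarrow> next_config own \<sigma> \<tau> h =
     (if own v \<in> P then (fst \<sigma> h, P - {snd \<tau> h (fst \<sigma> h)})
      else (fst \<tau> h, P \<union> {snd \<sigma> h (fst \<tau> h)}))"
  by (simp add: next_config_def Let_def)

definition successor1 :: "('v \<times> 'v) set \<Rightarrow> ('v \<Rightarrow> nat) \<Rightarrow> 'v strategy \<Rightarrow> 'v config list \<Rightarrow> 'v config \<Rightarrow> bool" where
  "successor1 E own \<sigma> h c \<longleftrightarrow> (case last h of (v, P) \<Rightarrow>
     if own v \<in> P then \<exists>k\<in>P. c = (fst \<sigma> h, P - {k})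
     else \<exists>u. (v, u) \<in> E \<and> c = (u, P \<union> {snd \<sigma> h u}))"

definition replaying_strategy :: "('v \<times> 'v) set \<Rightarrow> (nat \<Rightarrow> 'v config list) \<Rightarrow> 'v strategy" where
  "replaying_strategy E H = legalize2 E
     (\<lambda>h. fst (last (H (length h))),
      \<lambda>h u. SOME k. k \<in> snd (last h) \<and> last (H (length h)) = (u, snd (last h) - {k}))"

lemma next_config_replaying_strategy:
  assumes "last (H (length h)) = x" and "successor1 E own \<sigma> h x"
  shows "next_config own \<sigma> (replaying_strategy E H) h = x"
proof -
  obtain v P where last: "last h = (v, P)"
    by fastforce
  show ?thesis
  proof (cases "own v \<in> P")
    case True
    then obtain k where "k \<in> P \<and> x = (fst \<sigma> h, P - {k})"
      using assms(2) last unfolding successor1_def by auto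
    then have "snd (replaying_strategy E H) h (fst \<sigma> h) \<in> P \<and>
        x = (fst \<sigma> h, P - {snd (replaying_strategy E H) h (fst \<sigma> h)})"
      using someI[of "\<lambda>k. k \<in> P \<and> x = (fst \<sigma> h, P - {k})"] assms(1) last
      unfolding replaying_strategy_def legalize2_def by auto
    then show ?thesis
      using True last by (simp add: next_config_eq)
  next
    case False
    then obtain u where "(v, u) \<in> E" "x = (u, P \<union> {snd \<sigma> h u})"
      using assms(2) last unfolding successor1_def by auto
    then show ?thesis
      using False last assms(1) by (simp add: next_config_eq replaying_strategy_def legalize2_def)
  qed
qed

lemma successor1_run_is_history:
  assumes "pawn_game V E T d own"
    and run0: "H 0 = [c]"
    and run_Suc: "\<And>n. \<exists>x. H (Suc n) = H n @ [x] \<and> successor1 E own \<sigma> (H n) x"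
  obtains \<tau> where "legal2 V E d own \<tau>" and "\<And>n. history own \<sigma> \<tau> c n = H n"
proof
  show "legal2 V E d own (replaying_strategy E H)"
    unfolding replaying_strategy_def by (rule legal2_legalize2[OF assms(1)])
  have len: "length (H n) = Suc n" for n
  proof (induction n)
    case (Suc n)
    then show ?case using run_Suc[of n] by auto
  qed (simp add: run0)
  show "history own \<sigma> (replaying_strategy E H) c n = H n" for n
  proof (induction n)
    case 0
    then show ?case using run0 by simp
  next
    case (Suc n)
    obtain x where x: "H (Suc n) = H n @ [x]" and "successor1 E own \<sigma> (H n) x"
      using run_Suc by blast
    then have "next_config own \<sigma> (replaying_strategy E H) (H n) = x"
      using len by (intro next_config_replaying_strategy) simp_all
    then show ?case
      using Suc x by simp
  qed
qed

(* Works on the reversed history, so that the recursion strips the latest configuration. *)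
fun shadow_rev :: "('v config list \<Rightarrow> 'v config list \<Rightarrow> 'v config) \<Rightarrow> 'v config \<Rightarrow>
    'v config list \<Rightarrow> 'v config list" where
  "shadow_rev F c0 [] = []"
| "shadow_rev F c0 [c] = [c0]"
| "shadow_rev F c0 (c # c' # h) =
     F (rev (shadow_rev F c0 (c' # h))) (rev (c # c' # h)) # shadow_rev F c0 (c' # h)"

definition shadow :: "('v config list \<Rightarrow> 'v config list \<Rightarrow> 'v config) \<Rightarrow> 'v config \<Rightarrow>
    'v config list \<Rightarrow> 'v config list" where
  "shadow F c0 h = rev (shadow_rev F c0 (rev h))"

lemma shadow_singleton [simp]: "shadow F c0 [c] = [c0]"
  by (simp add: shadow_def)

lemma shadow_snoc:
  assumes "h \<noteq> []"
  shows "shadow F c0 (h @ [c]) = shadow F c0 h @ [F (shadow F c0 h) (h @ [c])]"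
proof -
  obtain c' h' where "rev h = c' # h'"
    using assms by (cases "rev h") auto
  then show ?thesis
    unfolding shadow_def by (simp add: rev_swap[symmetric])
qed

(* In the real play the opponent grabbed the single pawn in R - R'. *)
definition shadow_step :: "('v \<Rightarrow> nat) \<Rightarrow> 'v strategy \<Rightarrow> 'v config list \<Rightarrow> 'v config list \<Rightarrow> 'v config" where
  "shadow_step own \<sigma> S h =
     (let u = fst (last (butlast h)); R = snd (last (butlast h));
          u' = fst (last h); R' = snd (last h); Q = snd (last S) in
      if own u \<in> R then (u', if own u' \<in> Q - R' then Q - {own u'} else Q - (R - R'))
      else (u', Q \<union> {snd \<sigma> S u'}))"

lemma shadow_step_snoc:
  "last H = (u, R) \<Longrightarrow> last S = (w, Q) \<Longrightarrow> shadow_step own \<sigma> S (H @ [(u', R')]) =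
     (if own u \<in> R then (u', if own u' \<in> Q - R' then Q - {own u'} else Q - (R - R'))
      else (u', Q \<union> {snd \<sigma> S u'}))"
  by (simp add: shadow_step_def Let_def)

definition simulating_strategy ::
    "('v \<times> 'v) set \<Rightarrow> nat \<Rightarrow> ('v \<Rightarrow> nat) \<Rightarrow> 'v strategy \<Rightarrow> 'v config \<Rightarrow> 'v strategy" where
  "simulating_strategy E d own \<sigma> c0 = legalize1 E d
     (\<lambda>h. fst \<sigma> (shadow (shadow_step own \<sigma>) c0 h),
      \<lambda>h u'. let S = shadow (shadow_step own \<sigma>) c0 h; g = snd \<sigma> S u' in
        if own u' \<in> snd (last S) \<union> {g} \<and> own u' \<notin> snd (last h) then own u' else g)"

definition coupled :: "'v set \<Rightarrow> nat \<Rightarrow> ('v \<Rightarrow> nat) \<Rightarrow> 'v config \<Rightarrow> 'v config \<Rightarrow> bool" where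
  "coupled V d own c c_sim \<longleftrightarrow>
     fst c = fst c_sim \<and> fst c \<in> V \<and> snd c \<subseteq> snd c_sim \<and> snd c_sim \<subseteq> {1..d} \<and>
     (own (fst c) \<in> snd c \<longleftrightarrow> own (fst c) \<in> snd c_sim)"

context
  fixes V :: "'v set" and E T d own \<sigma> \<tau>' c0 H S u R Q
  assumes pg: "pawn_game V E T d own"
    and \<sigma>: "legal1 V E d own \<sigma>" and \<tau>': "legal2 V E d own \<tau>'"
    and H: "H \<noteq> []" and S: "shadow (shadow_step own \<sigma>) c0 H = S" "S \<noteq> []"
    and last_H: "last H = (u, R)" and last_S: "last S = (u, Q)"
    and u: "u \<in> V" and RQ: "R \<subseteq> Q" and Q: "Q \<subseteq> {1..d}" and ctl: "own u \<in> R \<longleftrightarrow> own u \<in> Q"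
begin

lemma simulation_step_own_move:
  assumes own_move: "own u \<in> R"
  defines "c \<equiv> next_config own (simulating_strategy E d own \<sigma> c0) \<tau>' H"
  shows "coupled V d own c (shadow_step own \<sigma> S (H @ [c])) \<and>
    successor1 E own \<sigma> S (shadow_step own \<sigma> S (H @ [c]))"
proof -
  define u' where "u' = fst \<sigma> S"
  have edge: "(u, u') \<in> E"
    using \<sigma> S(2) last_S u Q own_move ctl unfolding legal1_def u'_def by blast
  have "fst (simulating_strategy E d own \<sigma> c0) H = u'"
    unfolding simulating_strategy_def using edge last_H S(1) u'_def
    by (subst fst_legalize1) auto
  moreover define k where "k = snd \<tau>' H u'"
  moreover have k: "k \<in> R"
    using \<tau>' H last_H u RQ Q own_move edge unfolding legal2_def k_def by blast
  ultimately have c: "c = (u', R - {k})"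
    using own_move last_H unfolding c_def by (simp add: next_config_eq)
  have "R - (R - {k}) = {k}"
    using k by auto
  then have "shadow_step own \<sigma> S (H @ [c]) =
      (u', if own u' \<in> Q - (R - {k}) then Q - {own u'} else Q - {k})"
    using own_move last_H last_S c by (simp add: shadow_step_snoc)
  moreover have "u' \<in> V"
    using pg edge unfolding pawn_game_def by blast
  ultimately show ?thesis
    using own_move ctl last_S u'_def k RQ Q unfolding coupled_def successor1_def c by auto
qed

lemma simulation_step_opponent_move:
  assumes opponent_move: "own u \<notin> R"
  defines "c \<equiv> next_config own (simulating_strategy E d own \<sigma> c0) \<tau>' H"
  shows "coupled V d own c (shadow_step own \<sigma> S (H @ [c])) \<and>
    successor1 E own \<sigma> S (shadow_step own \<sigma> S (H @ [c]))"
proof -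
  define u' where "u' = fst \<tau>' H"
  have edge: "(u, u') \<in> E"
    using \<tau>' H last_H u RQ Q opponent_move unfolding legal2_def u'_def by blast
  then have u': "u' \<in> V" "own u' \<in> {1..d}"
    using pg unfolding pawn_game_def by auto
  define g where "g = snd \<sigma> S u'"
  have g: "g \<in> {1..d} - Q"
    using \<sigma> S(2) last_S u Q opponent_move ctl edge unfolding legal1_def g_def by blast
  define g' where "g' = (if own u' \<in> Q \<union> {g} \<and> own u' \<notin> R then own u' else g)"
  have g': "g' \<in> {1..d} - R"
    using g RQ u'(2) unfolding g'_def by auto
  have "snd (simulating_strategy E d own \<sigma> c0) H u' = g'"
    unfolding simulating_strategy_def using g' last_H S(1) last_S
    by (subst snd_legalize1) (auto simp: g_def g'_def Let_def)
  then have c: "c = (u', R \<union> {g'})"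
    using opponent_move last_H unfolding c_def u'_def by (simp add: next_config_eq)
  then have "shadow_step own \<sigma> S (H @ [c]) = (u', Q \<union> {g})"
    using opponent_move last_H last_S by (simp add: shadow_step_snoc g_def)
  then show ?thesis
    using opponent_move ctl last_S edge g g' RQ Q u'(1)
    unfolding coupled_def successor1_def c g'_def g_def by auto
qed

end

lemma simulation_step:
  assumes "pawn_game V E T d own"
    and "legal1 V E d own \<sigma>" and "legal2 V E d own \<tau>'"
    and "H \<noteq> []" and "shadow (shadow_step own \<sigma>) c0 H = S" "S \<noteq> []"
    and cpl: "coupled V d own (last H) (last S)"
  defines "c \<equiv> next_config own (simulating_strategy E d own \<sigma> c0) \<tau>' H"
  shows "coupled V d own c (shadow_step own \<sigma> S (H @ [c])) \<and>
    successor1 E own \<sigma> S (shadow_step own \<sigma> S (H @ [c]))"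
proof -
  obtain u R Q where "last H = (u, R)" "last S = (u, Q)"
    using cpl unfolding coupled_def by (metis prod.collapse)
  moreover from this have "u \<in> V" "R \<subseteq> Q" "Q \<subseteq> {1..d}" "own u \<in> R \<longleftrightarrow> own u \<in> Q"
    using cpl unfolding coupled_def by auto
  ultimately show ?thesis
    using simulation_step_own_move[OF assms(1-6)] simulation_step_opponent_move[OF assms(1-6)]
    unfolding c_def by blast
qed

lemma legal1_simulating_strategy:
  "pawn_game V E T d own \<Longrightarrow> legal1 V E d own (simulating_strategy E d own \<sigma> c0)"
  unfolding simulating_strategy_def by (rule legal1_legalize1)

lemma simulate_with_fewer_pawns:
  assumes pg: "pawn_game V E T d own"
    and "v \<in> V" "P \<subseteq> {1..d}" "P' \<subseteq> P" "own v \<in> P \<longrightarrow> own v \<in> P'"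
    and \<sigma>: "legal1 V E d own \<sigma>" and \<tau>': "legal2 V E d own \<tau>'"
  obtains \<tau> where "legal2 V E d own \<tau>"
    and "\<And>n. fst (play own (simulating_strategy E d own \<sigma> (v, P)) \<tau>' (v, P') n) =
              fst (play own \<sigma> \<tau> (v, P) n)"
proof -
  define H where "H n = history own (simulating_strategy E d own \<sigma> (v, P)) \<tau>' (v, P') n" for n
  define S where "S n = shadow (shadow_step own \<sigma>) (v, P) (H n)" for n
  have S_Suc: "S (Suc n) = S n @ [shadow_step own \<sigma> (S n) (H (Suc n))]" for n
    unfolding S_def H_def by (simp add: shadow_snoc)
  have S_not_Nil: "S n \<noteq> []" for n
    by (cases n) (simp add: S_def H_def, simp add: S_Suc)
  have cpl: "coupled V d own (last (H n)) (last (S n))" for n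
  proof (induction n)
    case 0
    then show ?case using assms(2-5) unfolding coupled_def S_def H_def by auto
  next
    case (Suc n)
    then show ?case
      using simulation_step[OF pg \<sigma> \<tau>' _ _ S_not_Nil] unfolding S_Suc
      by (simp add: S_def H_def)
  qed
  have "\<exists>x. S (Suc n) = S n @ [x] \<and> successor1 E own \<sigma> (S n) x" for n
    using simulation_step[OF pg \<sigma> \<tau>' _ _ S_not_Nil cpl] unfolding S_Suc
    by (simp add: S_def H_def)
  moreover have "S 0 = [(v, P)]"
    by (simp add: S_def H_def)
  ultimately obtain \<tau> where "legal2 V E d own \<tau>" and "\<And>n. history own \<sigma> \<tau> (v, P) n = S n"
    using successor1_run_is_history[OF pg] by metis
  moreover have "fst (last (H n)) = fst (last (S n))" for n
    using cpl unfolding coupled_def by blast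
  ultimately show thesis
    using that by (simp add: play_def H_def)
qed

(* Complement within {1..d}, extended by the identity outside {1..d} to make it an involution. *)
definition flip_config :: "nat \<Rightarrow> 'v config \<Rightarrow> 'v config" where
  "flip_config d c = (fst c, ({1..d} - snd c) \<union> (snd c - {1..d}))"

definition swap_strategy :: "nat \<Rightarrow> 'v strategy \<Rightarrow> 'v strategy" where
  "swap_strategy d \<sigma> = (\<lambda>h. fst \<sigma> (map (flip_config d) h), \<lambda>h. snd \<sigma> (map (flip_config d) h))"

lemma fst_flip_config [simp]: "fst (flip_config d c) = fst c"
  by (simp add: flip_config_def)

lemma flip_config_flip_config [simp]: "flip_config d (flip_config d c) = c"
  by (auto simp: flip_config_def prod_eq_iff)

lemma flip_config_involution [simp]: "flip_config d \<circ> flip_config d = id"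
  by (simp add: fun_eq_iff)

lemma swap_strategy_swap_strategy [simp]: "swap_strategy d (swap_strategy d \<sigma>) = \<sigma>"
  by (simp add: swap_strategy_def)

lemma swap_strategy_flipped_history [simp]:
  "fst (swap_strategy d \<sigma>) (map (flip_config d) h) = fst \<sigma> h"
  "snd (swap_strategy d \<sigma>) (map (flip_config d) h) = snd \<sigma> h"
  by (simp_all add: swap_strategy_def)

lemma flip_config_pawns: "P \<subseteq> {1..d} \<Longrightarrow> flip_config d (v, P) = (v, {1..d} - P)"
  by (auto simp: flip_config_def)

lemma legal2_swap_strategy:
  assumes "pawn_game V E T d own" and "legal1 V E d own \<sigma>"
  shows "legal2 V E d own (swap_strategy d \<sigma>)"
  unfolding legal2_def
proof (intro allI impI conjI)
  fix h v P assume h: "h \<noteq> []" "last h = (v, P)" "v \<in> V" "P \<subseteq> {1..d}"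
  then have "map (flip_config d) h \<noteq> []" "last (map (flip_config d) h) = (v, {1..d} - P)"
    by (simp_all add: last_map flip_config_pawns)
  then have "(own v \<in> {1..d} - P \<longrightarrow> (v, fst \<sigma> (map (flip_config d) h)) \<in> E) \<and>
      (own v \<notin> {1..d} - P \<longrightarrow> (\<forall>u. (v, u) \<in> E \<longrightarrow>
         snd \<sigma> (map (flip_config d) h) u \<in> {1..d} - ({1..d} - P)))"
    using assms(2) h(3) unfolding legal1_def by blast
  moreover have "own v \<in> {1..d}"
    using assms(1) h(3) unfolding pawn_game_def by blast
  ultimately show "own v \<notin> P \<Longrightarrow> (v, fst (swap_strategy d \<sigma>) h) \<in> E"
    and "own v \<in> P \<Longrightarrow> (v, u) \<in> E \<Longrightarrow> snd (swap_strategy d \<sigma>) h u \<in> P" for u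
    using h(4) unfolding swap_strategy_def by auto
qed

lemma legal1_swap_strategy:
  assumes "pawn_game V E T d own" and "legal2 V E d own \<tau>"
  shows "legal1 V E d own (swap_strategy d \<tau>)"
  unfolding legal1_def
proof (intro allI impI conjI)
  fix h v P assume h: "h \<noteq> []" "last h = (v, P)" "v \<in> V" "P \<subseteq> {1..d}"
  then have "map (flip_config d) h \<noteq> []" "last (map (flip_config d) h) = (v, {1..d} - P)"
    by (simp_all add: last_map flip_config_pawns)
  then have "(own v \<notin> {1..d} - P \<longrightarrow> (v, fst \<tau> (map (flip_config d) h)) \<in> E) \<and>
      (own v \<in> {1..d} - P \<longrightarrow> (\<forall>u. (v, u) \<in> E \<longrightarrow>
         snd \<tau> (map (flip_config d) h) u \<in> {1..d} - P))"
    using assms(2) h(3) unfolding legal2_def by blast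
  moreover have "own v \<in> {1..d}"
    using assms(1) h(3) unfolding pawn_game_def by blast
  ultimately show "own v \<in> P \<Longrightarrow> (v, fst (swap_strategy d \<tau>) h) \<in> E"
    and "own v \<notin> P \<Longrightarrow> (v, u) \<in> E \<Longrightarrow> snd (swap_strategy d \<tau>) h u \<in> {1..d} - P" for u
    using h(4) unfolding swap_strategy_def by auto
qed

lemma next_config_in_arena:
  assumes pg: "pawn_game V E T d own" and \<sigma>: "legal1 V E d own \<sigma>" and \<tau>: "legal2 V E d own \<tau>"
    and h: "h \<noteq> []" "last h = (v, P)" "v \<in> V" "P \<subseteq> {1..d}"
  shows "fst (next_config own \<sigma> \<tau> h) \<in> V \<and> snd (next_config own \<sigma> \<tau> h) \<subseteq> {1..d}"
proof -
  have "(own v \<in> P \<longrightarrow> (v, fst \<sigma> h) \<in> E) \<and>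
      (own v \<notin> P \<longrightarrow> (v, fst \<tau> h) \<in> E \<and> snd \<sigma> h (fst \<tau> h) \<in> {1..d} - P)"
    using \<sigma> \<tau> h unfolding legal1_def legal2_def by blast
  then show ?thesis
    using pg h(2,4) unfolding pawn_game_def by (auto simp: next_config_eq)
qed

lemma history_in_arena:
  assumes "pawn_game V E T d own" "legal1 V E d own \<sigma>" "legal2 V E d own \<tau>"
    and "v \<in> V" "P \<subseteq> {1..d}"
  shows "fst (last (history own \<sigma> \<tau> (v, P) n)) \<in> V \<and>
    snd (last (history own \<sigma> \<tau> (v, P) n)) \<subseteq> {1..d}"
proof (induction n)
  case (Suc n)
  then show ?case
    using next_config_in_arena[OF assms(1-3), where h = "history own \<sigma> \<tau> (v, P) n"]
    by (cases "last (history own \<sigma> \<tau> (v, P) n)") simp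
qed (use assms(4,5) in simp)

lemma next_config_swap:
  assumes "pawn_game V E T d own" "legal1 V E d own \<sigma>" "legal2 V E d own \<tau>"
    and "h \<noteq> []" "last h = (v, P)" "v \<in> V" "P \<subseteq> {1..d}"
  shows "next_config own (swap_strategy d \<tau>) (swap_strategy d \<sigma>) (map (flip_config d) h) =
    flip_config d (next_config own \<sigma> \<tau> h)"
proof -
  have last_flip: "last (map (flip_config d) h) = (v, {1..d} - P)" and "own v \<in> {1..d}"
    using assms unfolding pawn_game_def by (auto simp: last_map flip_config_pawns)
  moreover have "(v, fst \<sigma> h) \<in> E \<and> snd \<tau> h (fst \<sigma> h) \<in> P" if "own v \<in> P"
    using assms that unfolding legal1_def legal2_def by blast
  moreover have "snd \<sigma> h (fst \<tau> h) \<in> {1..d} - P" if "own v \<notin> P"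
    using assms that unfolding legal1_def legal2_def by blast
  ultimately show ?thesis
    using assms(5,7) by (auto simp: next_config_eq flip_config_def)
qed

lemma play_swap:
  assumes "pawn_game V E T d own" "legal1 V E d own \<sigma>" "legal2 V E d own \<tau>"
    and "v \<in> V" "P \<subseteq> {1..d}"
  shows "play own (swap_strategy d \<tau>) (swap_strategy d \<sigma>) (v, {1..d} - P) n =
    flip_config d (play own \<sigma> \<tau> (v, P) n)"
proof -
  have "history own (swap_strategy d \<tau>) (swap_strategy d \<sigma>) (v, {1..d} - P) n =
      map (flip_config d) (history own \<sigma> \<tau> (v, P) n)"
  proof (induction n)
    case 0
    then show ?case using assms(5) by (simp add: flip_config_pawns)
  next
    case (Suc n)
    obtain w Q where last: "last (history own \<sigma> \<tau> (v, P) n) = (w, Q)"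
      by fastforce
    then have "w \<in> V" "Q \<subseteq> {1..d}"
      using history_in_arena[OF assms, of n] by simp_all
    then show ?case
      using Suc next_config_swap[OF assms(1-3) history_not_Nil last] by simp
  qed
  then show ?thesis
    by (simp add: play_def last_map)
qed

lemma wins1_fewer_pawns:
  assumes pg: "pawn_game V E T d own"
    and "v \<in> V" "P \<subseteq> {1..d}" "P' \<subseteq> P" "own v \<in> P \<longrightarrow> own v \<in> P'"
    and "wins1 V E T d own (v, P)"
  shows "wins1 V E T d own (v, P')"
proof -
  obtain \<sigma> where \<sigma>: "legal1 V E d own \<sigma>"
    and win: "\<And>\<tau>. legal2 V E d own \<tau> \<Longrightarrow> \<exists>n. fst (play own \<sigma> \<tau> (v, P) n) \<in> T"
    using assms(6) unfolding wins1_def by blast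
  have "\<exists>n. fst (play own (simulating_strategy E d own \<sigma> (v, P)) \<tau>' (v, P') n) \<in> T"
    if "legal2 V E d own \<tau>'" for \<tau>'
    using simulate_with_fewer_pawns[OF assms(1-5) \<sigma> that] win by metis
  then show ?thesis
    unfolding wins1_def using legal1_simulating_strategy[OF pg] by blast
qed

lemma wins2_fewer_pawns:
  assumes pg: "pawn_game V E T d own"
    and vP: "v \<in> V" "P \<subseteq> {1..d}" "P' \<subseteq> P" and ctl: "own v \<notin> P' \<longrightarrow> own v \<notin> P"
    and "wins2 V E T d own (v, P')"
  shows "wins2 V E T d own (v, P)"
proof -
  obtain \<tau> where \<tau>: "legal2 V E d own \<tau>"
    and win: "\<And>\<sigma> n. legal1 V E d own \<sigma> \<Longrightarrow> fst (play own \<sigma> \<tau> (v, P') n) \<notin> T"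
    using assms(6) unfolding wins2_def by blast
  define \<rho> where "\<rho> = simulating_strategy E d own (swap_strategy d \<tau>) (v, {1..d} - P')"
  have \<tau>': "legal2 V E d own (swap_strategy d \<rho>)"
    unfolding \<rho>_def by (rule legal2_swap_strategy[OF pg legal1_simulating_strategy[OF pg]])
  have "own v \<in> {1..d}"
    using pg vP(1) unfolding pawn_game_def by blast
  then have flipped: "{1..d} - P' \<subseteq> {1..d}" "{1..d} - P \<subseteq> {1..d} - P'"
    "own v \<in> {1..d} - P' \<longrightarrow> own v \<in> {1..d} - P"
    using vP(3) ctl by blast+
  have "fst (play own \<sigma> (swap_strategy d \<rho>) (v, P) n) \<notin> T"
    if \<sigma>: "legal1 V E d own \<sigma>" for \<sigma> n
  proof -
    obtain \<pi> where \<pi>: "legal2 V E d own \<pi>" and sim: "\<And>n.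
        fst (play own \<rho> (swap_strategy d \<sigma>) (v, {1..d} - P) n) =
        fst (play own (swap_strategy d \<tau>) \<pi> (v, {1..d} - P') n)"
      using simulate_with_fewer_pawns[OF pg vP(1) flipped legal1_swap_strategy[OF pg \<tau>]
          legal2_swap_strategy[OF pg \<sigma>]] unfolding \<rho>_def by blast
    have "P' \<subseteq> {1..d}"
      using vP(2,3) by blast
    have "fst (play own \<sigma> (swap_strategy d \<rho>) (v, P) n) =
        fst (play own \<rho> (swap_strategy d \<sigma>) (v, {1..d} - P) n)"
      using play_swap[OF pg \<sigma> \<tau>' vP(1,2)] by simp
    also have "\<dots> = fst (play own (swap_strategy d \<tau>) \<pi> (v, {1..d} - P') n)"
      by (rule sim)
    also have "\<dots> = fst (play own (swap_strategy d \<pi>) \<tau> (v, P') n)"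
      using play_swap[OF pg legal1_swap_strategy[OF pg \<pi>] \<tau> vP(1) \<open>P' \<subseteq> {1..d}\<close>] by simp
    finally show ?thesis
      using win[OF legal1_swap_strategy[OF pg \<pi>]] by simp
  qed
  then show ?thesis
    unfolding wins2_def using \<tau>' by blast
qed

theorem theorem26:
  fixes V :: "'v set" and E :: "('v \<times> 'v) set" and T :: "'v set" and d :: nat
    and own :: "'v \<Rightarrow> nat" and v :: 'v and P P' :: "nat set"
  assumes "pawn_game V E T d own"
    and "v \<in> V" and "P \<subseteq> {1..d}" and "P' \<subseteq> P"
  shows "((own v \<in> P \<longrightarrow> own v \<in> P') \<and> wins1 V E T d own (v, P) \<longrightarrow> wins1 V E T d own (v, P'))
       \<and> ((own v \<notin> P' \<longrightarrow> own v \<notin> P) \<and> wins2 V E T d own (v, P') \<longrightarrow> wins2 V E T d own (v, P))"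
  using wins1_fewer_pawns[OF assms] wins2_fewer_pawns[OF assms] by blast

end
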